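(* Let $x \geq 1$ and $m \geq 1$ be integers. For $k \geq 1$, let $\mathcal{C}_{k,x}$ be the set of binary words of length $k$ containing no pattern from $\mathcal{T}_x = \{0\mathbf{1}^y0,\ 1\mathbf{0}^y1 : 1\le y\le x\}$ as a contiguous substring, listed in increasing lexicographic order (equivalently, increasing order as binary numbers with the leftmost bit most significant), and let $g(k,x,\mathbf{c}) \in \{0,1,\dots,N(k,x)-1\}$ be the position (index, starting from $0$) of $\mathbf{c}$ in this list, where $N(k,x)=|\mathcal{C}_{k,x}|$ for $k\ge 1$ and $N(k,x)\triangleq 2$ for all integers $k\le 1$. Let $\mathbf{c}' \in \mathcal{C}_{m+1,x}$, let $\mathbf{c}$ be the word formed by the $m$ rightmost bits of $\mathbf{c}'$, and (when $m-x\ge 1$) let $\mathbf{c}''$ be the word formed by the $m-x$ rightmost bits of $\mathbf{c}'$. Then: (1) if $\mathbf{c}'$ begins with $00$, then $g(m+1,x,\mathbf{c}') = g(m,x,\mathbf{c})$; (2) if $\mathbf{c}'$ begins with $0\mathbf{1}^{x+1}$, then $g(m+1,x,\mathbf{c}') = g(m,x,\mathbf{c}) - \tfrac12\left[N(m,x)-N(m-x,x)\right]$; (3) if $\mathbf{c}'$ begins with $\mathbf{1}^y\mathbf{0}^{x+1}$ for some $2 \le y \le x+1$, then $g(m+1,x,\mathbf{c}') = g(m,x,\mathbf{c}) + N(m-x,x)$; (4) if $\mathbf{c}'$ begins with $1\mathbf{0}^{x+1}$, then $g(m+1,x,\mathbf{c}') = g(m-x,x,\mathbf{c}'') + \tfrac12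 N(m+1,x)$; (5) if $\mathbf{c}'$ begins with $1\mathbf{1}^{x+1}$, then $g(m+1,x,\mathbf{c}') = g(m-x,x,\mathbf{c}'') + N(m,x)$. (In each case the words $\mathbf{c}$, $\mathbf{c}''$ belong to $\mathcal{C}_{m,x}$, $\mathcal{C}_{m-x,x}$ respectively.)
   Context: $\mathbf{0}^r$ (resp. $\mathbf{1}^r$) denotes a run of $r$ consecutive $0$'s (resp. $1$'s). "Begins with" a pattern means the leftmost bits of the word equal that pattern (so the case is vacuous if the pattern is longer than $m+1$). *)

theory Defs
  imports Complex_Main "HOL-Library.Sublist" "HOL-Library.List_Lexorder"
begin

(* Binary words are bool lists: False = bit 0, True = bit 1, leftmost bit first.
   Lexicographic order on equal-length bool lists (List_Lexorder, False < True)
   is the order as binary numbers with the leftmost bit most significant. *)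

definition forb :: "nat \<Rightarrow> bool list set" where
  "forb x = {[False] @ replicate y True @ [False] | y. 1 \<le> y \<and> y \<le> x}
          \<union> {[True] @ replicate y False @ [True] | y. 1 \<le> y \<and> y \<le> x}"

definition Cw :: "nat \<Rightarrow> nat \<Rightarrow> bool list set" where
  "Cw k x = {w. length w = k \<and> (\<forall>t \<in> forb x. \<not> sublist t w)}"

definition Nw :: "int \<Rightarrow> nat \<Rightarrow> int" where
  "Nw k x = (if k \<le> 1 then 2 else int (card (Cw (nat k) x)))"

definition gw :: "nat \<Rightarrow> nat \<Rightarrow> bool list \<Rightarrow> nat" where
  "gw k x c = card {d \<in> Cw k x. d < c}"

end

theory Submission
  imports Defs
begin

(* Prepending a bit b to a pattern-free word e with more than x letters keeps it pattern-free
   exactly when e begins with b or with (not b)^(x+1).  So the words of C_{m+1,x} beginning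
   with b are b.e with e in C_{m,x} beginning with b, together with b.(not b)^x.f with f in
   C_{m-x,x} beginning with not b; both correspondences preserve the lexicographic order.
   Complementing every bit shows that exactly half of C_{k,x} begins with 0.  Each of the five
   identities then follows by counting the words below c' block by block in this
   decomposition. *)

section \<open>Pattern-free words\<close>

definition forb_free :: "nat \<Rightarrow> bool list \<Rightarrow> bool" where
  "forb_free x w \<longleftrightarrow> (\<forall>t \<in> forb x. \<not> sublist t w)"

lemma Cw_eq: "Cw k x = {w. length w = k \<and> forb_free x w}"
  by (simp add: Cw_def forb_free_def)

lemma forb_eq: "forb x = {a # replicate y (\<not> a) @ [a] | a y. 1 \<le> y \<and> y \<le> x}"
  unfolding forb_def by (auto; metis (full_types))

lemma forb_free_Cons:
  "forb_free x (b # w) \<longleftrightarrow>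
     forb_free x w \<and> \<not> (\<exists>y. 1 \<le> y \<and> y \<le> x \<and> prefix (replicate y (\<not> b) @ [b]) w)"
  unfolding forb_free_def forb_eq sublist_Cons_right by (auto 0 4)

lemma forb_free_ConsD: "forb_free x (b # w) \<Longrightarrow> forb_free x w"
  by (simp add: forb_free_Cons)

lemma forb_free_Cons_Cons_same: "forb_free x (b # b # w) \<longleftrightarrow> forb_free x (b # w)"
  unfolding forb_free_Cons[of x b "b # w"] by (auto simp: Suc_le_eq dest!: not0_implies_Suc)

lemma forb_free_replicate_append: "forb_free x (replicate j b @ b # w) \<longleftrightarrow> forb_free x (b # w)"
  by (induction j) (simp_all add: forb_free_Cons_Cons_same replicate_app_Cons_same)

lemma map_Not_forb: "t \<in> forb x \<Longrightarrow> map Not t \<in> forb x"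
  unfolding forb_def by auto

lemma forb_free_map_Not: "forb_free x (map Not w) \<longleftrightarrow> forb_free x w"
proof -
  have *: "forb_free x (map Not v)" if "forb_free x v" for v
    unfolding forb_free_def
  proof (intro ballI notI)
    fix t assume "t \<in> forb x" "sublist t (map Not v)"
    then have "map Not t \<in> forb x" "sublist (map Not t) v"
      using map_Not_forb map_mono_sublist[of t "map Not v" Not] by (simp_all add: comp_def)
    with that show False unfolding forb_free_def by blast
  qed
  show ?thesis
    using *[of w] *[of "map Not w"] by (auto simp: comp_def)
qed

lemma prefix_replicate_or_run:
  "n \<le> length e \<Longrightarrow> prefix (replicate n a) e \<or> (\<exists>y<n. prefix (replicate y a @ [\<not> a]) e)"
proof (induction n arbitrary: e)
  case (Suc n)
  then obtain c e' where e: "e = c # e'" by (cases e) auto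
  show ?case
  proof (cases "c = a")
    case True
    with Suc.IH[of e'] Suc.prems e show ?thesis by auto
  next
    case False
    with e have "prefix (replicate 0 a @ [\<not> a]) e" by simp
    then show ?thesis by blast
  qed
qed simp

lemma run_not_prefix_replicate:
  "y < n \<Longrightarrow> prefix (replicate y a @ [\<not> a]) e \<Longrightarrow> \<not> prefix (replicate n a) e"
proof (induction y arbitrary: n e)
  case 0
  then show ?case by (cases n) (auto simp: prefix_def)
next
  case (Suc y)
  then obtain n' e' where "n = Suc n'" and "e = a # e'" and "y < n'"
    by (cases n; cases e) auto
  with Suc show ?case by auto
qed

lemma forb_free_Cons_iff:
  assumes "forb_free x e" and "x + 1 \<le> length e"
  shows "forb_free x (b # e) \<longleftrightarrow> hd e = b \<or> prefix (replicate (x + 1) (\<not> b)) e"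
proof -
  obtain a e' where e: "e = a # e'" using assms(2) by (cases e) auto
  have "(\<exists>y. 1 \<le> y \<and> y \<le> x \<and> prefix (replicate y (\<not> b) @ [b]) e)
          \<longleftrightarrow> a \<noteq> b \<and> \<not> prefix (replicate (x + 1) (\<not> b)) e"
  proof
    assume "\<exists>y. 1 \<le> y \<and> y \<le> x \<and> prefix (replicate y (\<not> b) @ [b]) e"
    then obtain y where y: "1 \<le> y" "y < x + 1" "prefix (replicate y (\<not> b) @ [\<not> \<not> b]) e"
      by auto
    then show "a \<noteq> b \<and> \<not> prefix (replicate (x + 1) (\<not> b)) e"
      using run_not_prefix_replicate[OF y(2,3)] e by (cases y) auto
  next
    assume run: "a \<noteq> b \<and> \<not> prefix (replicate (x + 1) (\<not> b)) e"
    then obtain y where y: "y < x + 1" "prefix (replicate y (\<not> b) @ [b]) e"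
      using prefix_replicate_or_run[OF assms(2), of "\<not> b"] by auto
    moreover have "y \<noteq> 0" using y(2) run e by (cases y) auto
    ultimately show "\<exists>y. 1 \<le> y \<and> y \<le> x \<and> prefix (replicate y (\<not> b) @ [b]) e"
      by (intro exI[of _ y]) auto
  qed
  then show ?thesis using assms(1) e by (auto simp: forb_free_Cons)
qed

lemma same_append_less_iff: "p @ f < p @ g \<longleftrightarrow> f < (g :: 'a :: order list)"
  by (induction p) auto

lemma less_replicate_True_append:
  assumes "n \<le> length e" and "\<not> prefix (replicate n True) e"
  shows "e < replicate n True @ r"
proof -
  obtain y where "y < n" and "prefix (replicate y True @ [False]) e"
    using prefix_replicate_or_run[OF assms(1), of True] assms(2) by auto
  then obtain d s where "n = y + Suc d" and e: "e = replicate y True @ False # s"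
    by (auto simp: prefix_def dest!: less_imp_Suc_add)
  then have "replicate n True @ r = replicate y True @ True # replicate d True @ r"
    by (simp only: replicate_add) simp
  then show ?thesis by (simp add: e same_append_less_iff)
qed

section \<open>Counting words by their leading bits\<close>

lemma finite_Cw: "finite (Cw k x)"
proof (rule finite_subset)
  show "Cw k x \<subseteq> {w. set w \<subseteq> UNIV \<and> length w = k}"
    by (auto simp: Cw_def)
qed (rule finite_lists_length_eq, simp)

lemma Cw_neq_Nil: "e \<in> Cw k x \<Longrightarrow> 1 \<le> k \<Longrightarrow> e \<noteq> []"
  by (auto simp: Cw_def)

lemma card_Cw_split:
  "card {e \<in> Cw k x. P e} = card {e \<in> Cw k x. P e \<and> Q e} + card {e \<in> Cw k x. P e \<and> \<not> Q e}"
proof -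
  have "{e \<in> Cw k x. P e} = {e \<in> Cw k x. P e \<and> Q e} \<union> {e \<in> Cw k x. P e \<and> \<not> Q e}"
    by blast
  then show ?thesis
    by (simp add: card_Un_disjoint finite_Cw disjoint_iff)
qed

lemma card_Cw_1: "card (Cw 1 x) = 2"
proof -
  have "3 \<le> length t" if "t \<in> forb x" for t
    using that by (auto simp: forb_def)
  then have "\<not> sublist t [b]" if "t \<in> forb x" for t b
    using that sublist_length_le by fastforce
  then have "Cw 1 x = {[False], [True]}"
    by (auto simp: Cw_def length_Suc_conv)
  then show ?thesis by simp
qed

definition Nhd :: "nat \<Rightarrow> nat \<Rightarrow> bool \<Rightarrow> nat" where
  "Nhd k x b = card {e \<in> Cw k x. hd e = b}"

lemma Nhd_False_eq_True:
  assumes "1 \<le> k"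
  shows "Nhd k x False = Nhd k x True"
proof -
  have "map Not ` {e \<in> Cw k x. \<not> hd e} = {e \<in> Cw k x. hd e}"
  proof (intro equalityI subsetI)
    fix e assume "e \<in> {e \<in> Cw k x. hd e}"
    moreover then have "e \<noteq> []" using Cw_neq_Nil assms by blast
    ultimately show "e \<in> map Not ` {e \<in> Cw k x. \<not> hd e}"
      by (intro image_eqI[of _ _ "map Not e"]) (auto simp: Cw_eq forb_free_map_Not hd_map comp_def)
  qed (use Cw_neq_Nil assms in \<open>auto simp: Cw_eq forb_free_map_Not hd_map\<close>)
  moreover have "inj_on (map Not) A" for A
    by (rule inj_on_subset[OF inj_mapI]) (auto intro: injI)
  ultimately show ?thesis
    unfolding Nhd_def by (metis (no_types) card_image)
qed

lemma Nw_eq_Nhd: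
  assumes "1 \<le> k"
  shows "Nw (int k) x = 2 * int (Nhd k x b)"
proof -
  have "card (Cw k x) = Nhd k x True + Nhd k x False"
    using card_Cw_split[of k x "\<lambda>_. True" hd] by (simp add: Nhd_def)
  then have "card (Cw k x) = 2 * Nhd k x b"
    using Nhd_False_eq_True[OF assms] by (cases b) simp_all
  then show ?thesis
    using card_Cw_1 assms by (auto simp: Nw_def)
qed

lemma Cw_Suc_hd_eq:
  "{d \<in> Cw (Suc m) x. hd d = b \<and> P d} = Cons b ` {e \<in> Cw m x. forb_free x (b # e) \<and> P (b # e)}"
  by (auto simp: Cw_eq length_Suc_conv intro: forb_free_ConsD)

lemma card_Cw_forb_free_Cons:
  assumes "x + 1 \<le> m"
  shows "card {e \<in> Cw m x. forb_free x (b # e) \<and> P e}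
    = card {e \<in> Cw m x. hd e = b \<and> P e} + card {e \<in> Cw m x. prefix (replicate (x + 1) (\<not> b)) e \<and> P e}"
proof -
  have iff: "forb_free x (b # e) \<longleftrightarrow> hd e = b \<or> prefix (replicate (x + 1) (\<not> b)) e"
    if "e \<in> Cw m x" for e
    using forb_free_Cons_iff that assms by (simp add: Cw_eq)
  have "{e \<in> Cw m x. (forb_free x (b # e) \<and> P e) \<and> hd e = b} = {e \<in> Cw m x. hd e = b \<and> P e}"
    using iff by blast
  moreover have "{e \<in> Cw m x. (forb_free x (b # e) \<and> P e) \<and> hd e \<noteq> b}
      = {e \<in> Cw m x. prefix (replicate (x + 1) (\<not> b)) e \<and> P e}"
    using iff by (auto simp: prefix_def)
  ultimately show ?thesis
    using card_Cw_split[of m x "\<lambda>e. forb_free x (b # e) \<and> P e" "\<lambda>e. hd e = b"] by simp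
qed

lemma card_Cw_prefix_replicate:
  assumes "1 \<le> k"
  shows "card {e \<in> Cw (k + j) x. prefix (replicate (j + 1) b) e \<and> P e}
       = card {f \<in> Cw k x. hd f = b \<and> P (replicate j b @ f)}"
proof -
  have "{e \<in> Cw (k + j) x. prefix (replicate (j + 1) b) e \<and> P e}
       = (\<lambda>f. replicate j b @ f) ` {f \<in> Cw k x. hd f = b \<and> P (replicate j b @ f)}"
  proof (intro equalityI subsetI)
    fix e assume "e \<in> {e \<in> Cw (k + j) x. prefix (replicate (j + 1) b) e \<and> P e}"
    moreover then obtain r where "e = replicate j b @ b # r"
      by (auto simp: prefix_def replicate_app_Cons_same)
    ultimately show "e \<in> (\<lambda>f. replicate j b @ f) ` {f \<in> Cw k x. hd f = b \<and> P (replicate j b @ f)}"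
      by (auto simp: Cw_eq forb_free_replicate_append)
  next
    fix e assume "e \<in> (\<lambda>f. replicate j b @ f) ` {f \<in> Cw k x. hd f = b \<and> P (replicate j b @ f)}"
    then obtain f where f: "f \<in> Cw k x" "hd f = b" "P e" "e = replicate j b @ f"
      by blast
    then have "f = b # tl f"
      using Cw_neq_Nil[OF _ assms] by (cases f) auto
    with f have e: "e = replicate j b @ b # tl f" and "b # tl f \<in> Cw k x"
      by simp_all
    then have "forb_free x e" and "length e = k + j"
      by (simp_all add: Cw_eq forb_free_replicate_append)
    then show "e \<in> {e \<in> Cw (k + j) x. prefix (replicate (j + 1) b) e \<and> P e}"
      using e \<open>P e\<close> by (simp add: Cw_eq replicate_app_Cons_same)
  qed
  then show ?thesis by (simp add: card_image inj_on_def)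
qed

lemma card_Cw_prefix_replicate_Suc:
  assumes "x + 1 \<le> m"
  shows "card {e \<in> Cw m x. prefix (replicate (x + 1) b) e} = Nhd (m - x) x b"
  using card_Cw_prefix_replicate[where k = "m - x" and j = x and P = "\<lambda>_. True"] assms
  by (simp add: Nhd_def)

lemma Nhd_Suc:
  assumes "x + 1 \<le> m"
  shows "Nhd (Suc m) x b = Nhd m x b + Nhd (m - x) x (\<not> b)"
  using Cw_Suc_hd_eq[of m x b "\<lambda>_. True"]
    card_Cw_forb_free_Cons[OF assms, where b = b and P = "\<lambda>_. True"]
    card_Cw_prefix_replicate_Suc[OF assms, where b = "\<not> b"]
  by (simp add: Nhd_def card_image)

section \<open>Ranks\<close>

lemma gw_hd:
  assumes "1 \<le> k" and "c \<noteq> []"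
  shows "gw k x c = (if hd c then Nhd k x False else 0) + card {e \<in> Cw k x. hd e = hd c \<and> e < c}"
proof -
  have "{e \<in> Cw k x. e < c \<and> hd e \<noteq> hd c} = {e \<in> Cw k x. \<not> hd e \<and> hd c}"
    using assms Cw_neq_Nil by (fastforce simp: neq_Nil_conv)
  then show ?thesis
    using card_Cw_split[where P = "\<lambda>e. e < c" and Q = "\<lambda>e. hd e = hd c"]
    unfolding gw_def Nhd_def by (simp add: conj_commute)
qed

lemma gw_Cons:
  "gw (Suc m) x (b # c)
     = (if b then Nhd (Suc m) x False else 0) + card {e \<in> Cw m x. forb_free x (b # e) \<and> e < c}"
proof -
  have "card {d \<in> Cw (Suc m) x. hd d = b \<and> d < b # c} = card {e \<in> Cw m x. forb_free x (b # e) \<and> e < c}"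
    using Cw_Suc_hd_eq[where P = "\<lambda>d. d < b # c"] by (simp add: card_image)
  then show ?thesis
    using gw_hd[of "Suc m" "b # c" x] by simp
qed

lemma card_Cw_prefix_replicate_less:
  assumes "1 \<le> k"
  shows "card {e \<in> Cw (k + j) x. prefix (replicate (j + 1) b) e \<and> e < replicate j b @ b # r}
     + (if b then Nhd k x False else 0) = gw k x (b # r)"
  using card_Cw_prefix_replicate[OF assms, where P = "\<lambda>e. e < replicate j b @ b # r"]
    gw_hd[OF assms, of "b # r" x]
  by (simp add: same_append_less_iff)

lemma card_Cw_hd_less_replicate_True:
  fixes r :: "bool list"
  assumes "x + 1 \<le> m"
  defines "p \<equiv> replicate (x + 1) True"
  shows "card {e \<in> Cw m x. hd e \<and> e < p @ r} + Nhd (m - x) x True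
     = card {e \<in> Cw m x. prefix p e \<and> e < p @ r} + Nhd m x True"
proof -
  have below: "e < p @ r" if "e \<in> Cw m x" and "\<not> prefix p e" for e
    using less_replicate_True_append[of "x + 1" e r] that assms(1) by (simp add: Cw_def p_def)
  have hd: "hd e" if "prefix p e" for e
    using that by (auto simp: p_def prefix_def)
  have "card {e \<in> Cw m x. hd e \<and> e < p @ r}
      = card {e \<in> Cw m x. prefix p e \<and> e < p @ r} + card {e \<in> Cw m x. hd e \<and> \<not> prefix p e}"
  proof -
    have "{e \<in> Cw m x. (hd e \<and> e < p @ r) \<and> prefix p e} = {e \<in> Cw m x. prefix p e \<and> e < p @ r}"
      and "{e \<in> Cw m x. (hd e \<and> e < p @ r) \<and> \<not> prefix p e} = {e \<in> Cw m x. hd e \<and> \<not> prefix p e}"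
      using below hd by blast+
    then show ?thesis
      using card_Cw_split[where P = "\<lambda>e. hd e \<and> e < p @ r" and Q = "prefix p"] by (simp only:)
  qed
  moreover have "Nhd m x True = Nhd (m - x) x True + card {e \<in> Cw m x. hd e \<and> \<not> prefix p e}"
  proof -
    have "{e \<in> Cw m x. hd e \<and> prefix p e} = {e \<in> Cw m x. prefix p e}"
      using hd by blast
    then show ?thesis
      using card_Cw_split[where P = hd and Q = "prefix p"]
        card_Cw_prefix_replicate_Suc[OF assms(1), where b = True, folded p_def]
      unfolding Nhd_def by simp
  qed
  ultimately show ?thesis by simp
qed

lemma gw_Cons_False_hd_False:
  assumes "1 \<le> m" and "c \<noteq> []" and "\<not> hd c"
  shows "gw (Suc m) x (False # c) = gw m x c"
proof -
  have "forb_free x (False # e) \<and> e < c \<longleftrightarrow> hd e = hd c \<and> e < c" if e: "e \<in> Cw m x" for e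
  proof -
    obtain a s where "e = a # s" using Cw_neq_Nil[OF e assms(1)] by (cases e) auto
    moreover obtain t where "c = False # t" using assms(2,3) by (cases c) auto
    ultimately show ?thesis
      using e by (cases a) (auto simp: Cw_eq forb_free_Cons_Cons_same)
  qed
  then have "{e \<in> Cw m x. forb_free x (False # e) \<and> e < c} = {e \<in> Cw m x. hd e = hd c \<and> e < c}"
    by blast
  then show ?thesis
    using gw_Cons[of m x False c] gw_hd[OF assms(1,2)] assms(3) by simp
qed

lemma gw_Cons_True_hd_True:
  assumes "x + 1 \<le> m" and "c \<noteq> []" and "hd c"
  shows "gw (Suc m) x (True # c) = gw m x c + Nhd (m - x) x False + Nhd (m - x) x True"
proof -
  have "{e \<in> Cw m x. prefix (replicate (x + 1) False) e \<and> e < c}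
      = {e \<in> Cw m x. prefix (replicate (x + 1) False) e}"
    using assms(2,3) by (auto simp: prefix_def neq_Nil_conv)
  then have "card {e \<in> Cw m x. forb_free x (True # e) \<and> e < c}
      = card {e \<in> Cw m x. hd e \<and> e < c} + Nhd (m - x) x False"
    using card_Cw_forb_free_Cons[OF assms(1), where b = True and P = "\<lambda>e. e < c"]
      card_Cw_prefix_replicate_Suc[OF assms(1), where b = False]
    by simp
  then show ?thesis
    using gw_Cons[of m x True c] gw_hd[of m c x] Nhd_Suc[OF assms(1), where b = False] assms
    by simp
qed

lemma gw_Cons_False_replicate_True:
  fixes r :: "bool list"
  assumes "x + 1 \<le> m"
  defines "c \<equiv> replicate (x + 1) True @ r"
  shows "gw (Suc m) x (False # c) + Nhd m x True = gw m x c + Nhd (m - x) x True"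
proof -
  have "{e \<in> Cw m x. \<not> hd e \<and> e < c} = {e \<in> Cw m x. \<not> hd e}"
    using Cw_neq_Nil assms by (fastforce simp: c_def neq_Nil_conv)
  then have "gw (Suc m) x (False # c)
      = Nhd m x False + card {e \<in> Cw m x. prefix (replicate (x + 1) True) e \<and> e < c}"
    using gw_Cons[of m x False c]
      card_Cw_forb_free_Cons[OF assms(1), where b = False and P = "\<lambda>e. e < c"]
    by (simp add: Nhd_def)
  moreover have "gw m x c = Nhd m x False + card {e \<in> Cw m x. hd e \<and> e < c}"
    using gw_hd[of m c x] assms by (simp add: c_def)
  ultimately show ?thesis
    using card_Cw_hd_less_replicate_True[OF assms(1), of r, folded c_def] Nhd_False_eq_True[of m x] assms
    by simp
qed

lemma gw_replicate_True_append:
  fixes r :: "bool list"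
  assumes "x + 1 \<le> m"
  defines "c \<equiv> replicate (x + 1) True @ r"
  shows "gw m x c + Nhd (m - x) x False + Nhd (m - x) x True
    = Nhd m x False + Nhd m x True + gw (m - x) x (True # r)"
proof -
  have "card {e \<in> Cw m x. prefix (replicate (x + 1) True) e \<and> e < c} + Nhd (m - x) x False
      = gw (m - x) x (True # r)"
    using card_Cw_prefix_replicate_less[of "m - x" x x True r] assms
    by (simp add: c_def replicate_app_Cons_same)
  moreover have "gw m x c = Nhd m x False + card {e \<in> Cw m x. hd e \<and> e < c}"
    using gw_hd[of m c x] assms by (simp add: c_def)
  ultimately show ?thesis
    using card_Cw_hd_less_replicate_True[OF assms(1), of r, folded c_def] by simp
qed

lemma gw_Cons_True_replicate_False:
  fixes r :: "bool list"
  assumes "x + 1 \<le> m"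
  defines "c \<equiv> replicate (x + 1) False @ r"
  shows "gw (Suc m) x (True # c) = Nhd (Suc m) x False + gw (m - x) x (False # r)"
proof -
  have "{e \<in> Cw m x. hd e \<and> e < c} = {}"
    using Cw_neq_Nil assms by (fastforce simp: c_def neq_Nil_conv)
  then have "card {e \<in> Cw m x. hd e \<and> e < c} = 0"
    by (simp only: card.empty)
  then have "card {e \<in> Cw m x. forb_free x (True # e) \<and> e < c}
      = card {e \<in> Cw m x. prefix (replicate (x + 1) False) e \<and> e < c}"
    using card_Cw_forb_free_Cons[OF assms(1), where b = True and P = "\<lambda>e. e < c"] by simp
  also have "\<dots> = gw (m - x) x (False # r)"
    using card_Cw_prefix_replicate_less[of "m - x" x x False r] assms
    by (simp add: c_def replicate_app_Cons_same)
  finally show ?thesis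
    using gw_Cons[of m x True c] by simp
qed

lemma drop_replicate_Suc_append: "drop n (replicate (Suc n) b @ r) = b # r"
  by (induction n) auto

lemma gw_Suc_prefix_False_False:
  assumes "1 \<le> m" and "prefix [False, False] c'"
  shows "gw (m + 1) x c' = gw m x (drop 1 c')"
proof -
  obtain r where "c' = False # False # r" using assms(2) by (auto simp: prefix_def)
  then show ?thesis using gw_Cons_False_hd_False[OF assms(1), of "False # r" x] by simp
qed

lemma gw_Suc_prefix_False_replicate_True:
  assumes "length c' = m + 1" and "prefix ([False] @ replicate (x + 1) True) c'"
  shows "real (gw (m + 1) x c') = real (gw m x (drop 1 c'))
    - (real_of_int (Nw (int m) x) - real_of_int (Nw (int m - int x) x)) / 2"
proof -
  obtain r where c': "c' = False # replicate (x + 1) True @ r"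
    using assms(2) by (auto simp: prefix_def)
  then have mx: "x + 1 \<le> m" using assms(1) by simp
  then have Nw: "Nw (int m) x = 2 * int (Nhd m x True)"
    "Nw (int m - int x) x = 2 * int (Nhd (m - x) x True)"
    using Nw_eq_Nhd[of m x True] Nw_eq_Nhd[of "m - x" x True] by simp_all
  have "gw (m + 1) x c' + Nhd m x True = gw m x (drop 1 c') + Nhd (m - x) x True"
    using gw_Cons_False_replicate_True[OF mx, of r] c' by simp
  then have "real (gw (m + 1) x c') + real (Nhd m x True)
      = real (gw m x (drop 1 c')) + real (Nhd (m - x) x True)"
    by (metis of_nat_add)
  with Nw show ?thesis by (simp add: diff_divide_distrib)
qed

lemma gw_Suc_prefix_True_True:
  assumes "x + 1 \<le> m" and "prefix [True, True] c'"
  shows "int (gw (m + 1) x c') = int (gw m x (drop 1 c')) + Nw (int m - int x) x"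
proof -
  obtain r where c': "c' = True # True # r" using assms(2) by (auto simp: prefix_def)
  have "Nw (int m - int x) x = int (Nhd (m - x) x False + Nhd (m - x) x True)"
    using Nw_eq_Nhd[of "m - x" x True] Nhd_False_eq_True[of "m - x" x] assms(1)
    by simp
  then show ?thesis
    using gw_Cons_True_hd_True[OF assms(1), of "True # r"] c' by simp
qed

lemma gw_Suc_prefix_True_replicate_False:
  assumes "length c' = m + 1" and "prefix ([True] @ replicate (x + 1) False) c'"
  shows "real (gw (m + 1) x c') = real (gw (m - x) x (drop (x + 1) c')) + real_of_int (Nw (int m + 1) x) / 2"
proof -
  obtain r where c': "c' = True # replicate (x + 1) False @ r"
    using assms(2) by (auto simp: prefix_def)
  then have mx: "x + 1 \<le> m" using assms(1) by simp
  have "Nw (int (m + 1)) x = 2 * int (Nhd (m + 1) x False)"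
    by (rule Nw_eq_Nhd) simp
  then have "Nw (int m + 1) x = 2 * int (Nhd (m + 1) x False)"
    by (simp only: of_nat_add of_nat_1)
  moreover have "drop (x + 1) c' = False # r"
    using drop_replicate_Suc_append[of x False r] c' by simp
  ultimately show ?thesis
    using gw_Cons_True_replicate_False[OF mx, of r] c' by simp
qed

lemma gw_Suc_prefix_True_replicate_True:
  assumes "length c' = m + 1" and "prefix ([True] @ replicate (x + 1) True) c'"
  shows "int (gw (m + 1) x c') = int (gw (m - x) x (drop (x + 1) c')) + Nw (int m) x"
proof -
  obtain r where c': "c' = True # replicate (x + 1) True @ r"
    using assms(2) by (auto simp: prefix_def)
  then have mx: "x + 1 \<le> m" using assms(1) by simp
  have "Nw (int m) x = int (Nhd m x False + Nhd m x True)"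
    and "Nw (int m - int x) x = int (Nhd (m - x) x False + Nhd (m - x) x True)"
    using Nw_eq_Nhd[of m x True] Nhd_False_eq_True[of m x]
      Nw_eq_Nhd[of "m - x" x True] Nhd_False_eq_True[of "m - x" x] mx
    by simp_all
  moreover have "drop (x + 1) c' = True # r"
    using drop_replicate_Suc_append[of x True r] c' by simp
  moreover have "prefix [True, True] c'" using c' by simp
  ultimately show ?thesis
    using gw_Suc_prefix_True_True[OF mx] gw_replicate_True_append[OF mx, of r] c' by simp
qed

theorem lemma1:
  fixes x m :: nat and c' :: "bool list"
  assumes "x \<ge> 1" and "m \<ge> 1" and "c' \<in> Cw (m + 1) x"
  defines "c \<equiv> drop 1 c'" and "c'' \<equiv> drop (x + 1) c'"
  shows
   "(prefix [False, False] c' \<longrightarrow> gw (m + 1) x c' = gw m x c)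
    \<and> (prefix ([False] @ replicate (x + 1) True) c' \<longrightarrow>
         real (gw (m + 1) x c') = real (gw m x c)
           - (real_of_int (Nw (int m) x) - real_of_int (Nw (int m - int x) x)) / 2)
    \<and> (\<forall>y. 2 \<le> y \<and> y \<le> x + 1 \<and> prefix (replicate y True @ replicate (x + 1) False) c' \<longrightarrow>
         int (gw (m + 1) x c') = int (gw m x c) + Nw (int m - int x) x)
    \<and> (prefix ([True] @ replicate (x + 1) False) c' \<longrightarrow>
         real (gw (m + 1) x c') = real (gw (m - x) x c'') + real_of_int (Nw (int m + 1) x) / 2)
    \<and> (prefix ([True] @ replicate (x + 1) True) c' \<longrightarrow>
         int (gw (m + 1) x c') = int (gw (m - x) x c'') + Nw (int m) x)"
proof (intro conjI allI impI; (elim conjE)?)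
  have len: "length c' = m + 1" using assms(3) by (simp add: Cw_def)
  show "gw (m + 1) x c' = gw m x c" if "prefix [False, False] c'"
    using gw_Suc_prefix_False_False[OF assms(2) that] unfolding c_def .
  show "real (gw (m + 1) x c') = real (gw m x c)
      - (real_of_int (Nw (int m) x) - real_of_int (Nw (int m - int x) x)) / 2"
    if "prefix ([False] @ replicate (x + 1) True) c'"
    using gw_Suc_prefix_False_replicate_True[OF len that] unfolding c_def .
  show "int (gw (m + 1) x c') = int (gw m x c) + Nw (int m - int x) x"
    if "2 \<le> y" and "y \<le> x + 1" and p: "prefix (replicate y True @ replicate (x + 1) False) c'" for y
  proof -
    have "replicate y True = replicate 2 True @ replicate (y - 2) True"
      using \<open>2 \<le> y\<close> by (metis le_add_diff_inverse replicate_add)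
    then have "prefix [True, True] c'"
      using prefix_order.trans[OF _ p] by (simp add: numeral_2_eq_2)
    moreover have "x + 1 \<le> m" using prefix_length_le[OF p] len \<open>2 \<le> y\<close> by simp
    ultimately show ?thesis
      using gw_Suc_prefix_True_True[of x m c'] unfolding c_def by simp
  qed
  show "real (gw (m + 1) x c') = real (gw (m - x) x c'') + real_of_int (Nw (int m + 1) x) / 2"
    if "prefix ([True] @ replicate (x + 1) False) c'"
    using gw_Suc_prefix_True_replicate_False[OF len that] unfolding c''_def .
  show "int (gw (m + 1) x c') = int (gw (m - x) x c'') + Nw (int m) x"
    if "prefix ([True] @ replicate (x + 1) True) c'"
    using gw_Suc_prefix_True_replicate_True[OF len that] unfolding c''_def .
qed
end
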